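(* Let $x$ be a stable g-matching with $x\ne x^{\max}$, let $w\in W$, and let $(c,a)$ and $(c',a')$ be disjoint (no common edge) essential $w$-pairs under $x$. Let $z:=x_w+\mathbf 1^a-\mathbf 1^c$ and $z':=x_w+\mathbf 1^{a'}-\mathbf 1^{c'}$. Then: (i) the vectors $z+\mathbf 1^{a'}-\mathbf 1^{c'}$ and $z'+\mathbf 1^a-\mathbf 1^c$ are acceptable for $w$; (ii) no edge $d\in U_F^+(x)$ is interesting for $w$ under $y:=x_w+\mathbf 1^a-\mathbf 1^c+\mathbf 1^{a'}-\mathbf 1^{c'}$; and (iii) the pair $(c',a')$ is essential under $z$, and $(c,a)$ is essential under $z'$ (with $z$, resp. $z'$, in place of $x_w$ in the definitions of legal and essential $w$-pairs).
   Context: Let $G=(V,E)$ be a finite bipartite graph with color classes $W$ and $F$; the edge joining $w\in W$ and $f\in F$ is written $wf$. Let $b\in\mathbb Z_+^E$ be capacities. For $v\in V$, $E_v$ is the set of edges at $v$, $\mathcal B_v=\{z\in\mathbb Z_+^{E_v}: z\le b|_{E_v}\}$, $\mathbf 1^e$ the unit vector of $e$, $|z|=\sum_e|z(e)|$, $\wedge,\vee$ componentwise min/max. Each $v$ has a choice function $C_v:\mathcal B_v\to\mathcal B_v$ with $C_v(z)\le z$ and, for all $z,z'$: (A1) $z\ge z'\ge C_v(z)\Rightarrow C_v(z')=C_v(z)$; (A2) $z\ge z'\Rightarrow C_v(z)\wedge z'\le C_v(z')$; (A3) $z\ge z'\Rightarrow|C_v(z)|\ge|C_v(z')|$. $z$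 is acceptable if $C_v(z)=z$; for distinct acceptable $z,z'$, $z'\prec_v z$ iff $C_v(z\vee z')=z$. $x_v$ = restriction of $x$ to $E_v$. A g-matching is $x\in\mathbb Z_+^E$, $x\le b$, each $x_v$ acceptable; $x\prec_F y$ (distinct) iff $x_f\preceq_f y_f$ for all $f\in F$. $e\in E_v$ is interesting for $v$ under acceptable $z$ if some $z'\in\mathcal B_v$ has $z'(e)>z(e)$, $z'(e')=z(e')$ for $e'\neq e$, $C_v(z')(e)>z(e)$; $e=wf$ is interesting for $v\in\{w,f\}$ under a g-matching $x$ if so under $x_v$, and blocks $x$ if interesting for both endpoints; stable g-matchings (no blocking edge) form a finite lattice under $\prec_F$ with maximum $x^{\max}$. For stable $x$: $U_F^+(x)$ = edges $wf$ interesting for $f$ under $x$; $U_F^-(x)$ = edges $wf$ with $x(wf)>0$ not interesting for $f$ under $x$. For $w\in W$, a legal $w$-pair under $x$ is $(c,a)$ with $c\in U_F^-(x)\cap E_w$, $a\in U_F^+(x)\cap E_w$ and $C_w(x_w+\mathbf 1^a-\mathbf 1^c)=x_w+\mathbf 1^a-\mathbf 1^c$; it is essential if no $d\in(U_F^+(x)\cap E_w)\setminus\{a\}$ is interesting for $w$ under $x_w+\mathbf 1^a-\mathbf 1^c$. *)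

theory Defs
  imports Main "HOL-Library.Function_Algebras"
begin

text \<open>Vertices have type 'v; an edge wf (w in W, f in F) is the pair (w,f).
  Vectors in Z_+^{E_v} are represented as functions on edges with integer
  values, nonnegative on E_v and zero outside E_v.\<close>

type_synonym 'v vec = "'v \<times> 'v \<Rightarrow> int"

definition Ev :: "('v \<times> 'v) set \<Rightarrow> 'v \<Rightarrow> ('v \<times> 'v) set" where
  "Ev E v = {e \<in> E. fst e = v \<or> snd e = v}"

definition Bv :: "('v \<times> 'v) set \<Rightarrow> 'v vec \<Rightarrow> 'v \<Rightarrow> 'v vec set" where
  "Bv E b v = {z. (\<forall>e \<in> Ev E v. 0 \<le> z e \<and> z e \<le> b e) \<and> (\<forall>e. e \<notin> Ev E v \<longrightarrow> z e = 0)}"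

definition unitv :: "'v \<times> 'v \<Rightarrow> 'v vec" where
  "unitv e = (\<lambda>e'. if e' = e then 1 else 0)"

definition vnorm :: "('v \<times> 'v) set \<Rightarrow> 'v \<Rightarrow> 'v vec \<Rightarrow> int" where
  "vnorm E v z = (\<Sum>e \<in> Ev E v. \<bar>z e\<bar>)"

definition vmin :: "'v vec \<Rightarrow> 'v vec \<Rightarrow> 'v vec" where
  "vmin z z' = (\<lambda>e. min (z e) (z' e))"

definition vmax :: "'v vec \<Rightarrow> 'v vec \<Rightarrow> 'v vec" where
  "vmax z z' = (\<lambda>e. max (z e) (z' e))"

definition choice_fun :: "('v \<times> 'v) set \<Rightarrow> 'v vec \<Rightarrow> 'v \<Rightarrow> ('v vec \<Rightarrow> 'v vec) \<Rightarrow> bool" where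
  "choice_fun E b v Cv \<longleftrightarrow>
     (\<forall>z \<in> Bv E b v. Cv z \<in> Bv E b v \<and> Cv z \<le> z) \<and>
     (\<forall>z \<in> Bv E b v. \<forall>z' \<in> Bv E b v. z \<ge> z' \<and> z' \<ge> Cv z \<longrightarrow> Cv z' = Cv z) \<and>
     (\<forall>z \<in> Bv E b v. \<forall>z' \<in> Bv E b v. z \<ge> z' \<longrightarrow> vmin (Cv z) z' \<le> Cv z') \<and>
     (\<forall>z \<in> Bv E b v. \<forall>z' \<in> Bv E b v. z \<ge> z' \<longrightarrow> vnorm E v (Cv z) \<ge> vnorm E v (Cv z'))"

definition model :: "'v set \<Rightarrow> 'v set \<Rightarrow> ('v \<times> 'v) set \<Rightarrow> 'v vec \<Rightarrow> ('v \<Rightarrow> 'v vec \<Rightarrow> 'v vec) \<Rightarrow> bool" where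
  "model W F E b C \<longleftrightarrow> finite W \<and> finite F \<and> W \<inter> F = {} \<and> E \<subseteq> W \<times> F \<and>
     (\<forall>e \<in> E. 0 \<le> b e) \<and> (\<forall>v \<in> W \<union> F. choice_fun E b v (C v))"

definition acceptable :: "('v \<times> 'v) set \<Rightarrow> 'v vec \<Rightarrow> ('v \<Rightarrow> 'v vec \<Rightarrow> 'v vec) \<Rightarrow> 'v \<Rightarrow> 'v vec \<Rightarrow> bool" where
  "acceptable E b C v z \<longleftrightarrow> z \<in> Bv E b v \<and> C v z = z"

definition pref :: "('v \<times> 'v) set \<Rightarrow> 'v vec \<Rightarrow> ('v \<Rightarrow> 'v vec \<Rightarrow> 'v vec) \<Rightarrow> 'v \<Rightarrow> 'v vec \<Rightarrow> 'v vec \<Rightarrow> bool" where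
  "pref E b C v z' z \<longleftrightarrow> acceptable E b C v z \<and> acceptable E b C v z' \<and> z \<noteq> z' \<and>
     C v (vmax z z') = z"

definition restr :: "('v \<times> 'v) set \<Rightarrow> 'v \<Rightarrow> 'v vec \<Rightarrow> 'v vec" where
  "restr E v x = (\<lambda>e. if e \<in> Ev E v then x e else 0)"

definition g_matching :: "'v set \<Rightarrow> 'v set \<Rightarrow> ('v \<times> 'v) set \<Rightarrow> 'v vec \<Rightarrow> ('v \<Rightarrow> 'v vec \<Rightarrow> 'v vec) \<Rightarrow> 'v vec \<Rightarrow> bool" where
  "g_matching W F E b C x \<longleftrightarrow>
     (\<forall>e \<in> E. 0 \<le> x e \<and> x e \<le> b e) \<and> (\<forall>e. e \<notin> E \<longrightarrow> x e = 0) \<and>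
     (\<forall>v \<in> W \<union> F. acceptable E b C v (restr E v x))"

definition precF :: "'v set \<Rightarrow> 'v set \<Rightarrow> ('v \<times> 'v) set \<Rightarrow> 'v vec \<Rightarrow> ('v \<Rightarrow> 'v vec \<Rightarrow> 'v vec) \<Rightarrow> 'v vec \<Rightarrow> 'v vec \<Rightarrow> bool" where
  "precF W F E b C x y \<longleftrightarrow> g_matching W F E b C x \<and> g_matching W F E b C y \<and> x \<noteq> y \<and>
     (\<forall>f \<in> F. restr E f x = restr E f y \<or> pref E b C f (restr E f x) (restr E f y))"

definition interesting :: "('v \<times> 'v) set \<Rightarrow> 'v vec \<Rightarrow> ('v \<Rightarrow> 'v vec \<Rightarrow> 'v vec) \<Rightarrow> 'v \<Rightarrow> 'v vec \<Rightarrow> 'v \<times> 'v \<Rightarrow> bool" where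
  "interesting E b C v z e \<longleftrightarrow> e \<in> Ev E v \<and>
     (\<exists>z' \<in> Bv E b v. z' e > z e \<and> (\<forall>e'. e' \<noteq> e \<longrightarrow> z' e' = z e') \<and> C v z' e > z e)"

definition blocks :: "('v \<times> 'v) set \<Rightarrow> 'v vec \<Rightarrow> ('v \<Rightarrow> 'v vec \<Rightarrow> 'v vec) \<Rightarrow> 'v vec \<Rightarrow> 'v \<times> 'v \<Rightarrow> bool" where
  "blocks E b C x e \<longleftrightarrow> e \<in> E \<and>
     interesting E b C (fst e) (restr E (fst e) x) e \<and>
     interesting E b C (snd e) (restr E (snd e) x) e"

definition stable :: "'v set \<Rightarrow> 'v set \<Rightarrow> ('v \<times> 'v) set \<Rightarrow> 'v vec \<Rightarrow> ('v \<Rightarrow> 'v vec \<Rightarrow> 'v vec) \<Rightarrow> 'v vec \<Rightarrow> bool" where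
  "stable W F E b C x \<longleftrightarrow> g_matching W F E b C x \<and> (\<forall>e \<in> E. \<not> blocks E b C x e)"

definition is_xmax :: "'v set \<Rightarrow> 'v set \<Rightarrow> ('v \<times> 'v) set \<Rightarrow> 'v vec \<Rightarrow> ('v \<Rightarrow> 'v vec \<Rightarrow> 'v vec) \<Rightarrow> 'v vec \<Rightarrow> bool" where
  "is_xmax W F E b C xm \<longleftrightarrow> stable W F E b C xm \<and>
     (\<forall>y. stable W F E b C y \<longrightarrow> y = xm \<or> precF W F E b C y xm)"

definition UFplus :: "('v \<times> 'v) set \<Rightarrow> 'v vec \<Rightarrow> ('v \<Rightarrow> 'v vec \<Rightarrow> 'v vec) \<Rightarrow> 'v vec \<Rightarrow> ('v \<times> 'v) set" where
  "UFplus E b C x = {e \<in> E. interesting E b C (snd e) (restr E (snd e) x) e}"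

definition UFminus :: "('v \<times> 'v) set \<Rightarrow> 'v vec \<Rightarrow> ('v \<Rightarrow> 'v vec \<Rightarrow> 'v vec) \<Rightarrow> 'v vec \<Rightarrow> ('v \<times> 'v) set" where
  "UFminus E b C x = {e \<in> E. x e > 0 \<and> \<not> interesting E b C (snd e) (restr E (snd e) x) e}"

text \<open>Legal / essential w-pairs under x, with a vector z in place of x_w
  (take z = restr E w x for the original notion).\<close>
definition legal_pair :: "('v \<times> 'v) set \<Rightarrow> 'v vec \<Rightarrow> ('v \<Rightarrow> 'v vec \<Rightarrow> 'v vec) \<Rightarrow> 'v vec \<Rightarrow> 'v \<Rightarrow> 'v vec \<Rightarrow> 'v \<times> 'v \<Rightarrow> 'v \<times> 'v \<Rightarrow> bool" where
  "legal_pair E b C x w z c a \<longleftrightarrow>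
     c \<in> UFminus E b C x \<inter> Ev E w \<and> a \<in> UFplus E b C x \<inter> Ev E w \<and>
     acceptable E b C w (z + unitv a - unitv c)"

definition essential_pair :: "('v \<times> 'v) set \<Rightarrow> 'v vec \<Rightarrow> ('v \<Rightarrow> 'v vec \<Rightarrow> 'v vec) \<Rightarrow> 'v vec \<Rightarrow> 'v \<Rightarrow> 'v vec \<Rightarrow> 'v \<times> 'v \<Rightarrow> 'v \<times> 'v \<Rightarrow> bool" where
  "essential_pair E b C x w z c a \<longleftrightarrow> legal_pair E b C x w z c a \<and>
     (\<forall>d \<in> (UFplus E b C x \<inter> Ev E w) - {a}. \<not> interesting E b C w (z + unitv a - unitv c) d)"

end

theory Submission
  imports Defs
begin

text \<open>Write X for x_w, so that z = X + 1^a - 1^c, z' = X + 1^a' - 1^c' and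
  y = z + 1^a' - 1^c' = z' + 1^a - 1^c; by disjointness every coordinate of y equals the
  corresponding coordinate of z or of z'.  Stability of x makes no edge of U_F^+(x) interesting
  for w under X, and essentiality (plus a direct check for a itself) extends this to z and z'.
  By consistency (A1), raising an acceptable vector on uninteresting edges does not change its
  choice.  So for any V \<ge> y that differs from y only on U_F^+(x) we get C_w(V + 1^c') = z and
  C_w(V + 1^c) = z'; substitutability (A2) then gives C_w(V) \<ge> y, and size monotonicity (A3)
  gives |C_w(V)| \<le> |z| = |y|.  Taking V = y shows that y is acceptable, and taking V = y
  raised at a single edge d shows that C_w(V) cannot exceed y at d, i.e. d is not interesting.\<close>

declare split_paired_All [simp del] split_paired_Ex [simp del]

lemma unitv_apply [simp]: "unitv e e' = (if e' = e then 1 else 0)"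
  by (simp add: unitv_def)

lemma sum_add_unitv_diff_unitv:
  assumes "finite G" "a \<in> G" "c \<in> G"
  shows "sum (u + unitv a - unitv c) G = (sum u G :: int)"
  using assms by (simp add: sum.distrib sum_subtractf)

lemma member_diff_le_sum_diff:
  fixes L U :: "'a \<Rightarrow> int"
  assumes "finite G" "d \<in> G" "\<forall>e\<in>G. L e \<le> U e"
  shows "U d - L d \<le> sum U G - sum L G"
proof -
  have "U d - L d \<le> (\<Sum>e\<in>G. U e - L e)"
    using assms by (intro member_le_sum) auto
  then show ?thesis by (simp add: sum_subtractf)
qed

lemma BvD:
  assumes "z \<in> Bv E b v"
  shows "e \<in> Ev E v \<Longrightarrow> 0 \<le> z e \<and> z e \<le> b e" and "e \<notin> Ev E v \<Longrightarrow> z e = 0"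
  using assms unfolding Bv_def by blast+

lemma Bv_mix:
  assumes "U \<in> Bv E b v" "V \<in> Bv E b v" "\<And>e. Z e = U e \<or> Z e = V e"
  shows "Z \<in> Bv E b v"
proof -
  have "(e \<in> Ev E v \<longrightarrow> 0 \<le> Z e \<and> Z e \<le> b e) \<and> (e \<notin> Ev E v \<longrightarrow> Z e = 0)" for e
    using assms(3)[of e] BvD[OF assms(1), of e] BvD[OF assms(2), of e] by auto
  then show ?thesis unfolding Bv_def by blast
qed

lemma acceptableD:
  "acceptable E b C v z \<Longrightarrow> z \<in> Bv E b v"
  "acceptable E b C v z \<Longrightarrow> C v z = z"
  unfolding acceptable_def by blast+

lemma not_interesting_outside:
  "e \<notin> Ev E v \<Longrightarrow> \<not> interesting E b C v z e"
  unfolding interesting_def by blast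

locale vertex_choice =
  fixes E :: "('v \<times> 'v) set" and b :: "'v vec" and C :: "'v \<Rightarrow> 'v vec \<Rightarrow> 'v vec" and w :: 'v
  assumes choice: "choice_fun E b w (C w)"
begin

lemma choice_in_Bv: "z \<in> Bv E b w \<Longrightarrow> C w z \<in> Bv E b w"
  using choice unfolding choice_fun_def by blast

lemma choice_le: "z \<in> Bv E b w \<Longrightarrow> C w z \<le> z"
  using choice unfolding choice_fun_def by blast

lemma choice_consistent:
  "z \<in> Bv E b w \<Longrightarrow> z' \<in> Bv E b w \<Longrightarrow> z' \<le> z \<Longrightarrow> C w z \<le> z' \<Longrightarrow> C w z' = C w z"
  using choice unfolding choice_fun_def by blast

lemma choice_substitutable:
  assumes "z \<in> Bv E b w" "z' \<in> Bv E b w" "z' \<le> z"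
  shows "min (C w z e) (z' e) \<le> C w z' e"
proof -
  have "vmin (C w z) z' \<le> C w z'" using choice assms unfolding choice_fun_def by blast
  then show ?thesis unfolding vmin_def le_fun_def by blast
qed

lemma choice_sum_mono:
  assumes "z \<in> Bv E b w" "z' \<in> Bv E b w" "z' \<le> z"
  shows "sum (C w z') (Ev E w) \<le> sum (C w z) (Ev E w)"
proof -
  have vnorm_eq_sum: "vnorm E w u = sum u (Ev E w)" if "u \<in> Bv E b w" for u
    unfolding vnorm_def using BvD(1)[OF that] by (intro sum.cong) auto
  have "vnorm E w (C w z') \<le> vnorm E w (C w z)" using choice assms unfolding choice_fun_def by blast
  then show ?thesis using vnorm_eq_sum choice_in_Bv assms by simp
qed

lemma choice_raise_at_not_interesting:
  assumes v: "acceptable E b C w v" and e: "\<not> interesting E b C w v e"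
    and V: "V \<in> Bv E b w" "v \<le> V" "\<forall>e'. e' \<noteq> e \<longrightarrow> V e' = v e'"
  shows "C w V = v"
proof (cases "V e = v e")
  case True
  then have "V = v" using V(3) by (intro ext) metis
  then show ?thesis using acceptableD(2)[OF v] by simp
next
  case False
  then have "v e < V e" using le_funD[OF V(2), of e] by simp
  moreover have "e \<in> Ev E w"
    using calculation BvD(2)[OF V(1)] BvD(2)[OF acceptableD(1)[OF v]] by (metis less_irrefl)
  ultimately have "C w V e \<le> v e" using e V unfolding interesting_def by force
  then have "C w V \<le> v" using choice_le[OF V(1)] V(3) unfolding le_fun_def by metis
  then show ?thesis
    using choice_consistent[OF V(1) acceptableD(1)[OF v] V(2)] acceptableD(2)[OF v] by simp
qed

lemma choice_raise_on_not_interesting: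
  assumes v: "acceptable E b C w v" and D: "finite D" "\<forall>d\<in>D. \<not> interesting E b C w v d"
    and V: "V \<in> Bv E b w" "v \<le> V" "\<forall>e. e \<notin> D \<longrightarrow> V e = v e"
  shows "C w V = v"
  using D V
proof (induction D arbitrary: V rule: finite_induct)
  case empty
  then have "V = v" by (intro ext) blast
  then show ?case using acceptableD(2)[OF v] by simp
next
  case (insert e D)
  note VB = insert.prems(2)
  have vB: "v \<in> Bv E b w" using acceptableD(1)[OF v] .
  define V' where "V' = V(e := v e)"
  define V'' where "V'' = v(e := V e)"
  have V'B: "V' \<in> Bv E b w" by (rule Bv_mix[OF VB vB]) (simp add: V'_def)
  have V''B: "V'' \<in> Bv E b w" by (rule Bv_mix[OF VB vB]) (simp add: V''_def)
  have vV: "v e' \<le> V e'" for e' using le_funD[OF insert.prems(3)] .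
  have "C w V' = v"
  proof (rule insert.IH[OF _ V'B])
    show "\<forall>d\<in>D. \<not> interesting E b C w v d" using insert.prems(1) by blast
    show "v \<le> V'" using vV by (simp add: V'_def le_fun_def)
    show "\<forall>e'. e' \<notin> D \<longrightarrow> V' e' = v e'" using insert.prems(4) by (simp add: V'_def)
  qed
  then have substitute: "min (C w V e') (V' e') \<le> v e'" for e'
    using choice_substitutable[OF VB V'B] vV by (metis V'_def fun_upd_apply le_funI order_refl)
  have "C w V'' = v"
    by (rule choice_raise_at_not_interesting[OF v _ V''B])
      (use insert.prems vV in \<open>auto simp: V''_def le_fun_def\<close>)
  moreover have "C w V \<le> V''"
  proof (rule le_funI)
    fix e'
    show "C w V e' \<le> V'' e'"
      using substitute[of e'] vV[of e'] le_funD[OF choice_le[OF VB], of e']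
      by (cases "e' = e") (auto simp: V'_def V''_def)
  qed
  moreover have "V'' \<le> V" using vV by (simp add: V''_def le_fun_def)
  ultimately show ?case using choice_consistent[OF VB V''B] by simp
qed

lemma exchange_choice_bounds:
  assumes u: "acceptable E b C w u"
    and a: "\<not> interesting E b C w u a"
    and c: "c \<in> Ev E w" "c \<noteq> a"
    and D: "finite D" "c \<notin> D" "\<forall>d\<in>D. \<not> interesting E b C w u d"
    and V: "V \<in> Bv E b w" "u + unitv a - unitv c \<le> V"
      "\<forall>e. e \<notin> D \<longrightarrow> V e = (u + unitv a - unitv c) e"
  shows "min (u e) (V e) \<le> C w V e" and "sum (C w V) (Ev E w) \<le> sum u (Ev E w)"
proof -
  define V1 where "V1 = V + unitv c"
  have V1c: "V1 c = u c" using V(3) D(2) c(2) by (simp add: V1_def)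
  have V1B: "V1 \<in> Bv E b w"
    by (rule Bv_mix[OF V(1) acceptableD(1)[OF u]]) (use V1c in \<open>simp add: V1_def\<close>)
  have "C w V1 = u"
  proof (rule choice_raise_on_not_interesting[OF u _ _ V1B])
    show "finite (insert a D)" "\<forall>d\<in>insert a D. \<not> interesting E b C w u d" using a D by auto
    show "u \<le> V1"
    proof (rule le_funI)
      fix e show "u e \<le> V1 e"
        using le_funD[OF V(2), of e] V1c by (cases "e = c") (auto simp: V1_def split: if_splits)
    qed
    show "\<forall>e. e \<notin> insert a D \<longrightarrow> V1 e = u e" using V(3) V1c by (auto simp: V1_def)
  qed
  moreover have "V \<le> V1" by (simp add: V1_def le_fun_def)
  ultimately show "min (u e) (V e) \<le> C w V e" "sum (C w V) (Ev E w) \<le> sum u (Ev E w)"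
    using choice_substitutable[OF V1B V(1)] choice_sum_mono[OF V1B V(1)] by simp_all
qed

lemma exchange_keeps_not_interesting:
  assumes fin: "finite (Ev E w)" and u: "acceptable E b C w u"
    and a: "\<not> interesting E b C w u a" and c: "c \<in> Ev E w" "c \<noteq> a"
  shows "\<not> interesting E b C w (u + unitv a - unitv c) a"
proof
  let ?z = "u + unitv a - unitv c"
  assume "interesting E b C w ?z a"
  then obtain V where aE: "a \<in> Ev E w"
    and V: "V \<in> Bv E b w" "?z a < V a" "\<forall>e. e \<noteq> a \<longrightarrow> V e = ?z e"
    and gain: "?z a < C w V a"
    unfolding interesting_def by blast
  have "?z \<le> V" using V(2,3) by (metis le_funI order_less_imp_le order_refl)
  then have low: "min (u e) (V e) \<le> C w V e" and size: "sum (C w V) (Ev E w) \<le> sum u (Ev E w)" for e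
    using exchange_choice_bounds[OF u a c, of "{a}" V] V c(2) a by auto
  \<comment> \<open>C_w(V) \<ge> u - 1^c and |C_w(V)| \<le> |u| leave room for only one unit above u at a.\<close>
  have "\<forall>e\<in>Ev E w. (u - unitv c) e \<le> C w V e"
  proof
    fix e
    have "(u - unitv c) e \<le> min (u e) (V e)"
      using le_funD[OF \<open>?z \<le> V\<close>, of e] by (auto split: if_splits)
    then show "(u - unitv c) e \<le> C w V e" using low[of e] by linarith
  qed
  from member_diff_le_sum_diff[OF fin aE this]
  have "C w V a - u a \<le> sum (C w V) (Ev E w) - (sum u (Ev E w) - 1)"
    using fin c by (simp add: sum_subtractf c(2) [symmetric])
  then show False using gain size c(2) by simp
qed

lemma disjoint_exchanges_combine:
  assumes fin: "finite (Ev E w)" and X: "acceptable E b C w X"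
    and P: "P \<subseteq> Ev E w" "\<forall>d\<in>P. \<not> interesting E b C w X d"
    and pairs: "a \<in> P" "a' \<in> P" "c \<in> Ev E w - P" "c' \<in> Ev E w - P" "{c, a} \<inter> {c', a'} = {}"
    and z: "acceptable E b C w (X + unitv a - unitv c)"
      "\<forall>d\<in>P - {a}. \<not> interesting E b C w (X + unitv a - unitv c) d"
    and z': "acceptable E b C w (X + unitv a' - unitv c')"
      "\<forall>d\<in>P - {a'}. \<not> interesting E b C w (X + unitv a' - unitv c') d"
  defines "y \<equiv> X + unitv a - unitv c + unitv a' - unitv c'"
  shows "acceptable E b C w y" and "\<forall>d\<in>P. \<not> interesting E b C w y d"
proof -
  define u where "u = X + unitv a - unitv c"
  define u' where "u' = X + unitv a' - unitv c'"
  have distinct: "a \<noteq> c" "a' \<noteq> c'" "a \<noteq> a'" "a \<noteq> c'" "c \<noteq> a'" "c \<noteq> c'" using pairs by auto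
  have not_interesting_u: "\<forall>d\<in>P. \<not> interesting E b C w u d"
    using z(2) exchange_keeps_not_interesting[OF fin X] P(2) pairs distinct unfolding u_def by blast
  have not_interesting_u': "\<forall>d\<in>P. \<not> interesting E b C w u' d"
    using z'(2) exchange_keeps_not_interesting[OF fin X] P(2) pairs distinct unfolding u'_def by blast
  have y_u: "y = u + unitv a' - unitv c'" and y_u': "y = u' + unitv a - unitv c"
    by (auto simp: y_def u_def u'_def)
  have y_mix: "y e = u e \<or> y e = u' e" for e
    using distinct by (auto simp: y_def u_def u'_def)
  have yB: "y \<in> Bv E b w"
    using Bv_mix[OF acceptableD(1)[OF z(1)] acceptableD(1)[OF z'(1)]] y_mix unfolding u_def u'_def by blast
  have dominated: "y \<le> C w V \<and> sum (C w V) (Ev E w) \<le> sum y (Ev E w)"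
    if D: "finite D" "D \<subseteq> P" and V: "V \<in> Bv E b w" "y \<le> V" "\<forall>e. e \<notin> D \<longrightarrow> V e = y e" for D V
  proof
    have "c \<notin> D" "c' \<notin> D" using D(2) pairs by auto
    moreover have "\<forall>d\<in>D. \<not> interesting E b C w u d" "\<forall>d\<in>D. \<not> interesting E b C w u' d"
      using D(2) not_interesting_u not_interesting_u' by auto
    moreover note V[unfolded y_u] V[unfolded y_u']
    ultimately have bound_u: "min (u e) (V e) \<le> C w V e"
      and size_u: "sum (C w V) (Ev E w) \<le> sum u (Ev E w)"
      and bound_u': "min (u' e) (V e) \<le> C w V e" for e
      using exchange_choice_bounds[OF z(1)[folded u_def], of a' c' D V] not_interesting_u
        exchange_choice_bounds[OF z'(1)[folded u'_def], of a c D V] not_interesting_u'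
        pairs D(1) distinct by simp_all
    show "y \<le> C w V"
    proof (rule le_funI)
      fix e
      from y_mix[of e] show "y e \<le> C w V e"
        using le_funD[OF V(2), of e] bound_u[of e] bound_u'[of e] by (auto simp: min_def split: if_splits)
    qed
    have "sum y (Ev E w) = sum u (Ev E w)"
      unfolding y_u by (rule sum_add_unitv_diff_unitv[OF fin]) (use pairs P in auto)
    then show "sum (C w V) (Ev E w) \<le> sum y (Ev E w)" using size_u by simp
  qed
  show "acceptable E b C w y"
    using dominated[of "{}" y] yB choice_le[OF yB] unfolding acceptable_def by auto
  show "\<forall>d\<in>P. \<not> interesting E b C w y d"
  proof (intro ballI notI)
    fix d assume d: "d \<in> P"
    assume "interesting E b C w y d"
    then obtain V where V: "V \<in> Bv E b w" "y d < V d" "\<forall>e. e \<noteq> d \<longrightarrow> V e = y e"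
      and gain: "y d < C w V d"
      unfolding interesting_def by blast
    have "y \<le> V" using V(2,3) by (metis le_funI order_less_imp_le order_refl)
    with V d have "y \<le> C w V" and size: "sum (C w V) (Ev E w) \<le> sum y (Ev E w)"
      using dominated[of "{d}" V] by auto
    then have "\<forall>e\<in>Ev E w. y e \<le> C w V e" by (simp add: le_fun_def)
    with d P(1) have "C w V d - y d \<le> sum (C w V) (Ev E w) - sum y (Ev E w)"
      by (intro member_diff_le_sum_diff[OF fin]) auto
    then show False using gain size by linarith
  qed
qed

end

lemma model_finite_Ev:
  assumes "model W F E b C"
  shows "finite (Ev E v)"
proof -
  have "finite (W \<times> F)" "E \<subseteq> W \<times> F" using assms unfolding model_def by auto
  then show ?thesis unfolding Ev_def by (auto intro: finite_subset)
qed

lemma stable_UFplus_not_interesting: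
  assumes model: "model W F E b C" and "stable W F E b C x" and w: "w \<in> W"
    and d: "d \<in> UFplus E b C x"
  shows "\<not> interesting E b C w (restr E w x) d"
proof (cases "d \<in> Ev E w")
  case True
  have "d \<in> E" and "interesting E b C (snd d) (restr E (snd d) x) d"
    using d unfolding UFplus_def by blast+
  moreover have "snd d \<in> F" "w \<notin> F"
    using \<open>d \<in> E\<close> w model unfolding model_def by (auto simp: mem_Times_iff dest!: subsetD)
  then have "fst d = w" using True unfolding Ev_def by auto
  ultimately show ?thesis using \<open>stable W F E b C x\<close> unfolding stable_def blocks_def by blast
qed (rule not_interesting_outside)

theorem lemma3p7:
  fixes W F :: "'v set" and E :: "('v \<times> 'v) set" and b x xm :: "'v vec"
    and C :: "'v \<Rightarrow> 'v vec \<Rightarrow> 'v vec" and w :: 'v and c a c' a' :: "'v \<times> 'v"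
  assumes "model W F E b C"
    and "stable W F E b C x"
    and "is_xmax W F E b C xm" and "x \<noteq> xm"
    and "w \<in> W"
    and "essential_pair E b C x w (restr E w x) c a"
    and "essential_pair E b C x w (restr E w x) c' a'"
    and "{c, a} \<inter> {c', a'} = {}"
  defines "z \<equiv> restr E w x + unitv a - unitv c"
    and "z' \<equiv> restr E w x + unitv a' - unitv c'"
    and "y \<equiv> restr E w x + unitv a - unitv c + unitv a' - unitv c'"
  shows "acceptable E b C w (z + unitv a' - unitv c') \<and> acceptable E b C w (z' + unitv a - unitv c)
    \<and> (\<forall>d \<in> UFplus E b C x. \<not> interesting E b C w y d)
    \<and> essential_pair E b C x w z c' a' \<and> essential_pair E b C x w z' c a"
proof -
  interpret vertex_choice E b C w
    using assms(1,5) unfolding model_def by unfold_locales blast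
  let ?X = "restr E w x" and ?P = "UFplus E b C x \<inter> Ev E w"
  have X: "acceptable E b C w ?X"
    using assms(2,5) unfolding stable_def g_matching_def by blast
  have P: "\<forall>d\<in>?P. \<not> interesting E b C w ?X d"
    using stable_UFplus_not_interesting[OF assms(1,2,5)] by blast
  have "UFplus E b C x \<inter> UFminus E b C x = {}" unfolding UFplus_def UFminus_def by blast
  with assms(6,7) have pairs: "a \<in> ?P" "a' \<in> ?P" "c \<in> Ev E w - ?P" "c' \<in> Ev E w - ?P"
    unfolding essential_pair_def legal_pair_def by blast+
  have exchanges: "acceptable E b C w (?X + unitv a - unitv c)"
    "\<forall>d\<in>?P - {a}. \<not> interesting E b C w (?X + unitv a - unitv c) d"
    "acceptable E b C w (?X + unitv a' - unitv c')"
    "\<forall>d\<in>?P - {a'}. \<not> interesting E b C w (?X + unitv a' - unitv c') d"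
    using assms(6,7) unfolding essential_pair_def legal_pair_def by blast+
  note combined = disjoint_exchanges_combine[OF model_finite_Ev[OF assms(1)] X Int_lower2 P
      pairs assms(8) exchanges, folded y_def]
  have "\<forall>d\<in>UFplus E b C x. \<not> interesting E b C w y d"
  proof
    fix d assume "d \<in> UFplus E b C x"
    then show "\<not> interesting E b C w y d"
      using combined(2) not_interesting_outside[of d] by (cases "d \<in> Ev E w") auto
  qed
  moreover have "z + unitv a' - unitv c' = y" "z' + unitv a - unitv c = y"
    by (auto simp: y_def z_def z'_def)
  ultimately show ?thesis
    using combined(1) assms(6,7) unfolding essential_pair_def legal_pair_def z_def z'_def by auto
qed

end
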